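(* Let $\vec S_n(t),\bar{\vec S}_n(t)\in\mathbb{C}^m$, $v_n(t)$ ($n\in\mathbb{Z}$) satisfy the discrete multicomponent Yajima--Oikawa system \begin{align*} \mathrm{i}\,\vec S_{n,t}&=v_n(\vec S_{n+1}+\vec S_{n-1})-c\,\vec S_n,\\ \mathrm{i}\,\bar{\vec S}_{n,t}&=-v_n(\bar{\vec S}_{n+1}+\bar{\vec S}_{n-1})+c\,\bar{\vec S}_n,\\ v_{n,t}&=\tfrac12 v_n\,\Delta_n^+\big(\langle\vec S_n,\bar{\vec S}_{n-1}\rangle+\langle\vec S_{n-1},\bar{\vec S}_n\rangle\big). \end{align*} Define scalars $F_n^{(j)}$ and vectors $\vec G_n^{(j)},\vec H_n^{(j)}$ ($j\ge0$) recursively by $F_n^{(0)}=1$ and \begin{align*} F_n^{(j)}&=v_nv_{n+1}\sum_{k=0}^{j-2}F_n^{(k)}F_{n+1}^{(j-k-2)}+\langle\vec S_n,\vec G_n^{(j-1)}\rangle+\langle\vec H_n^{(j-1)},\bar{\vec S}_n\rangle\quad(j\ge1),\\ \vec G_n^{(j)}&=-\tfrac{\mathrm{i}}{2}F_n^{(j)}\bar{\vec S}_{n+1}+v_{n+1}\sum_{k=0}^{j-1}F_n^{(k)}\vec G_{n+1}^{(j-k-1)}-\tfrac{\mathrm{i}}{2}v_{n+1}\sum_{k=0}^{j-1}F_n^{(k)}F_{n+1}^{(j-k-1)}\bar{\vec S}_n,\\ \vec H_n^{(j)}&=-\tfrac{\mathrm{i}}{2}F_n^{(j)}\vec S_{n+1}-v_{n+1}\sum_{k=0}^{j-1}F_n^{(k)}\vec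 H_{n+1}^{(j-k-1)}+\tfrac{\mathrm{i}}{2}v_{n+1}\sum_{k=0}^{j-1}F_n^{(k)}F_{n+1}^{(j-k-1)}\vec S_n, \end{align*} (empty sums are zero). Then the system possesses infinitely many conservation laws, obtained by comparing coefficients of each power of $1/\lambda$ on both sides of the formal power series identity \[ \Big[\log v_n+\log\Big(1+\sum_{j=1}^\infty\lambda^{-j}F_n^{(j)}\Big)\Big]_t=\Delta_n^+\Big[-\frac{\mathrm{i}}{\lambda}v_{n-1}v_n\Big(1+\sum_{j=1}^\infty\lambda^{-j}F_n^{(j)}\Big)-\mathrm{i}\lambda\frac{1}{1+\sum_{j=1}^\infty\lambda^{-j}F_{n-1}^{(j)}}\Big], \] where $\log(1+x)$ and $1/(1+x)$ are expanded as formal power series in $1/\lambda$.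
   Context: $\langle\vec a,\vec b\rangle=\sum_i a^{(i)}b^{(i)}$ is the bilinear scalar product (no conjugation); $\Delta_n^+f_n:=f_{n+1}-f_n$; $c$ is an arbitrary constant; $\bar{\vec S}_n$ is an independent vector variable. A conservation law is an identity of the form $(\rho_n)_t=\Delta_n^+ J_n$ with $\rho_n,J_n$ local functions of the dependent variables. *)

theory Defs
  imports "HOL-Analysis.Analysis" "HOL-Computational_Algebra.Formal_Laurent_Series"
begin

definition bip :: "complex^'m \<Rightarrow> complex^'m \<Rightarrow> complex" where
  "bip a b = (\<Sum>k\<in>UNIV. a $ k * b $ k)"

text \<open>The triple (F_n^(j), G_n^(j), H_n^(j)) for fixed time, given the lattice
  fields S, Sb (= bar S) and v as functions of the site n.\<close>
fun fgh :: "(int \<Rightarrow> complex^'m) \<Rightarrow> (int \<Rightarrow> complex^'m) \<Rightarrow> (int \<Rightarrow> complex)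
             \<Rightarrow> nat \<Rightarrow> int \<Rightarrow> complex \<times> (complex^'m) \<times> (complex^'m)" where
  "fgh S Sb v j n =
    (let Fj = (if j = 0 then 1 else
                 v n * v (n+1) * (\<Sum>k<j-1. fst (fgh S Sb v k n) * fst (fgh S Sb v (j-k-2) (n+1)))
                 + bip (S n) (fst (snd (fgh S Sb v (j-1) n)))
                 + bip (snd (snd (fgh S Sb v (j-1) n))) (Sb n));
         Gj = (- \<i>/2 * Fj) *s Sb (n+1)
              + v (n+1) *s (\<Sum>k<j. fst (fgh S Sb v k n) *s fst (snd (fgh S Sb v (j-k-1) (n+1))))
              - (\<i>/2 * v (n+1) * (\<Sum>k<j. fst (fgh S Sb v k n) * fst (fgh S Sb v (j-k-1) (n+1)))) *s Sb n;
         Hj = (- \<i>/2 * Fj) *s S (n+1)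
              - v (n+1) *s (\<Sum>k<j. fst (fgh S Sb v k n) *s snd (snd (fgh S Sb v (j-k-1) (n+1))))
              + (\<i>/2 * v (n+1) * (\<Sum>k<j. fst (fgh S Sb v k n) * fst (fgh S Sb v (j-k-1) (n+1)))) *s S n
     in (Fj, Gj, Hj))"

definition Fc :: "(int \<Rightarrow> complex^'m) \<Rightarrow> (int \<Rightarrow> complex^'m) \<Rightarrow> (int \<Rightarrow> complex) \<Rightarrow> nat \<Rightarrow> int \<Rightarrow> complex"
  where "Fc S Sb v j n = fst (fgh S Sb v j n)"
definition Gc :: "(int \<Rightarrow> complex^'m) \<Rightarrow> (int \<Rightarrow> complex^'m) \<Rightarrow> (int \<Rightarrow> complex) \<Rightarrow> nat \<Rightarrow> int \<Rightarrow> complex^'m"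
  where "Gc S Sb v j n = fst (snd (fgh S Sb v j n))"
definition Hc :: "(int \<Rightarrow> complex^'m) \<Rightarrow> (int \<Rightarrow> complex^'m) \<Rightarrow> (int \<Rightarrow> complex) \<Rightarrow> nat \<Rightarrow> int \<Rightarrow> complex^'m"
  where "Hc S Sb v j n = snd (snd (fgh S Sb v j n))"

text \<open>Generating series 1 + sum_{j>=1} mu^j F_n^(j), in the variable mu = 1/lambda.\<close>
definition Pser :: "(int \<Rightarrow> complex^'m) \<Rightarrow> (int \<Rightarrow> complex^'m) \<Rightarrow> (int \<Rightarrow> complex) \<Rightarrow> int \<Rightarrow> complex fps"
  where "Pser S Sb v n = Abs_fps (\<lambda>j. Fc S Sb v j n)"

definition logP :: "(int \<Rightarrow> complex^'m) \<Rightarrow> (int \<Rightarrow> complex^'m) \<Rightarrow> (int \<Rightarrow> complex) \<Rightarrow> int \<Rightarrow> complex fps"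
  where "logP S Sb v n = fps_ln 1 oo (Pser S Sb v n - 1)"

definition Jser :: "(int \<Rightarrow> complex^'m) \<Rightarrow> (int \<Rightarrow> complex^'m) \<Rightarrow> (int \<Rightarrow> complex) \<Rightarrow> int \<Rightarrow> complex fls"
  where "Jser S Sb v n =
     fls_const (- \<i> * v (n-1) * v n) * fls_X * fps_to_fls (Pser S Sb v n)
     - fls_const \<i> * fls_X_inv * fps_to_fls (inverse (Pser S Sb v (n-1)))"

end

theory Submission
  imports Defs
begin

(*
  Write P_n = 1 + sum_j mu^j F_n^(j) with mu = 1/lambda, and let G_n, H_n be the generating series
  of the vectors G_n^(j), H_n^(j). The recursions defining F, G, H become algebraic identities
  between these series. In terms of g = G/P, h = H/P and b_n = <S_n, g_n> + <h_n, Sb_n> they give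
  1/P_n = 1 - mu^2 v_n v_(n+1) P_(n+1) - mu b_n, hence J_(n+1) - J_n = i (b_n - b_(n-1)), and it
  remains to show (log P_n)_t = A_n := i (b_n - b_(n-1)) - v_(n,t) / v_n.

  To this end we write down candidate time derivatives P' = P A, G', H' and check, using the
  equations of motion, that they satisfy the time-differentiated recursions. Every right-hand side
  carries a factor mu in front of the unknown series, so the recursions determine each coefficient
  from lower ones, and induction on the coefficient index shows that the candidates are the actual
  coefficientwise time derivatives.
*)

section \<open>Power series and Laurent series\<close>

lemma fps_X_mult_const_mult_nth:
  "(fps_X * (fps_const c * (A * B))) $ j = c * (\<Sum>k<j. A $ k * B $ (j - k - 1))"
  for A B :: "'a::comm_semiring_1 fps"
proof (cases j)
  case (Suc l)
  have "(fps_X * (fps_const c * (A * B))) $ j = c * (\<Sum>i=0..l. A $ i * B $ (l - i))"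
    unfolding fps_X_mult_nth fps_mult_left_const_nth by (simp add: Suc fps_mult_nth)
  also have "(\<Sum>i=0..l. A $ i * B $ (l - i)) = (\<Sum>k<j. A $ k * B $ (j - k - 1))"
    unfolding Suc by (rule sum.cong) auto
  finally show ?thesis .
qed simp

lemma fps_X_mult_fps_shift: "fps_X * fps_shift 1 P = P - fps_const (P $ 0)"
  for P :: "'a::comm_ring_1 fps"
  by (intro fps_ext) simp

lemma inverse_fps_eq_1_minus_fps_X:
  fixes P :: "'a::field fps"
  assumes "P $ 0 = 1"
  shows "inverse P = 1 - fps_X * (fps_shift 1 P * inverse P)"
proof -
  have "fps_X * fps_shift 1 P = P - 1" using fps_X_mult_fps_shift[of P] assms by simp
  moreover have "P * inverse P = 1" by (rule inverse_mult_eq_1') (simp add: assms)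
  ultimately show ?thesis by algebra
qed

lemma fps_deriv_fps_ln_compose:
  fixes P :: "'a::field_char_0 fps"
  assumes "P $ 0 = 1"
  shows "fps_deriv (fps_ln 1 oo (P - 1)) = fps_deriv P * inverse P"
proof -
  have P0: "(P - 1) $ 0 = 0" using assms by simp
  have "fps_deriv (fps_ln 1 oo (P - 1)) = (fps_deriv (fps_ln 1) oo (P - 1)) * fps_deriv (P - 1)"
    by (rule fps_compose_deriv[OF P0])
  also have "fps_deriv (fps_ln 1) oo (P - 1) = inverse ((1 + fps_X) oo (P - 1))"
    unfolding fps_ln_deriv by (simp add: fps_inverse_compose[OF P0])
  also have "(1 + fps_X) oo (P - 1) = P"
    by (simp add: fps_compose_add_distrib fps_X_fps_compose_startby0[OF P0])
  finally show ?thesis by (simp add: mult.commute)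
qed

lemma fps_to_fls_sum: "fps_to_fls (sum f A) = (\<Sum>x\<in>A. fps_to_fls (f x))"
  by (induct A rule: infinite_finite_induct) simp_all

lemma fls_const_sum: "fls_const (sum f A) = (\<Sum>x\<in>A. fls_const (f x))"
  by (induct A rule: infinite_finite_induct) (simp_all flip: fls_plus_const)

lemma fls_X_mult_fls_X_inv: "fls_X * fls_X_inv = (1::'a::division_ring fls)"
  by (metis fls_X_nonzero fls_inverse_X right_inverse)

lemma fls_const_inverse_2: "2 * fls_const (inverse (2::'a::field_char_0)) = 1"
  by (metis fls_const_1 fls_const_mult_const fls_const_numeral right_inverse zero_neq_numeral)

lemma fls_const_divide: "fls_const (a / b) = fls_const a * fls_const (inverse b)"
  for a b :: "'a::field"
  by (simp add: divide_inverse)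

text \<open>Pushes \<open>fps_to_fls\<close> and \<open>fls_const\<close> inwards, so that identities between Laurent
  series built from constants and power series become polynomial identities for \<open>algebra\<close>.\<close>
lemmas fls_normalize = fps_one_to_fls fps_to_fls_plus fps_to_fls_minus fps_to_fls_uminus
  fls_times_fps_to_fls fps_const_to_fls fps_X_to_fls fps_to_fls_sum
  fls_plus_const[symmetric] fls_minus_const[symmetric] fls_const_uminus
  fls_const_mult_const[symmetric] fls_const_divide fls_const_1 fls_const_numeral

lemma fls_const_ii: "fls_const \<i> * fls_const \<i> = (-1 :: complex fls)"
  by simp

lemmas fls_unit_relations =
  fls_X_mult_fls_X_inv[where 'a = complex] fls_const_inverse_2[where 'a = complex] fls_const_ii

section \<open>Coefficientwise time derivatives of power series\<close>

definition has_fps_derivative_below :: "nat \<Rightarrow> (real \<Rightarrow> 'a::real_normed_field fps) \<Rightarrow> 'a fps \<Rightarrow> real \<Rightarrow> bool"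
  where "has_fps_derivative_below N A A' t \<longleftrightarrow>
           (\<forall>j<N. ((\<lambda>s. A s $ j) has_vector_derivative A' $ j) (at t))"

lemma has_fps_derivative_below_0: "has_fps_derivative_below 0 A A' t"
  unfolding has_fps_derivative_below_def by simp

lemma has_fps_derivative_below_SucD:
  "has_fps_derivative_below (Suc N) A A' t \<Longrightarrow> has_fps_derivative_below N A A' t"
  unfolding has_fps_derivative_below_def by simp

lemma has_fps_derivative_below_const: "has_fps_derivative_below N (\<lambda>s. C) 0 t"
  unfolding has_fps_derivative_below_def by (auto intro!: derivative_eq_intros)

lemma has_fps_derivative_below_fps_const:
  "(f has_vector_derivative f') (at t) \<Longrightarrow>
     has_fps_derivative_below N (\<lambda>s. fps_const (f s)) (fps_const f') t"
  unfolding has_fps_derivative_below_def by (auto intro!: derivative_eq_intros)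

lemma has_fps_derivative_below_add:
  "has_fps_derivative_below N A A' t \<Longrightarrow> has_fps_derivative_below N B B' t \<Longrightarrow>
     has_fps_derivative_below N (\<lambda>s. A s + B s) (A' + B') t"
  unfolding has_fps_derivative_below_def by (auto intro!: derivative_eq_intros)

lemma has_fps_derivative_below_diff:
  "has_fps_derivative_below N A A' t \<Longrightarrow> has_fps_derivative_below N B B' t \<Longrightarrow>
     has_fps_derivative_below N (\<lambda>s. A s - B s) (A' - B') t"
  unfolding has_fps_derivative_below_def by (auto intro!: derivative_eq_intros)

lemma has_fps_derivative_below_sum:
  "(\<And>i. i \<in> I \<Longrightarrow> has_fps_derivative_below N (A i) (A' i) t) \<Longrightarrow>
     has_fps_derivative_below N (\<lambda>s. \<Sum>i\<in>I. A i s) (\<Sum>i\<in>I. A' i) t"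
  unfolding has_fps_derivative_below_def fps_sum_nth by (auto intro!: has_vector_derivative_sum)

lemma has_fps_derivative_below_mult:
  assumes A: "has_fps_derivative_below N A A' t" and B: "has_fps_derivative_below N B B' t"
  shows "has_fps_derivative_below N (\<lambda>s. A s * B s) (A' * B t + A t * B') t"
  unfolding has_fps_derivative_below_def
proof (intro allI impI)
  fix j assume "j < N"
  with A B have "((\<lambda>s. \<Sum>i=0..j. A s $ i * B s $ (j - i)) has_vector_derivative
      (\<Sum>i=0..j. A t $ i * B' $ (j - i) + A' $ i * B t $ (j - i))) (at t)"
    unfolding has_fps_derivative_below_def
    by (auto intro!: has_vector_derivative_sum has_vector_derivative_mult)
  then show "((\<lambda>s. (A s * B s) $ j) has_vector_derivative (A' * B t + A t * B') $ j) (at t)"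
    by (simp add: fps_mult_nth sum.distrib add.commute)
qed

text \<open>Multiplication by \<open>fps_X\<close> shifts the coefficients up by one, so one more
  coefficient of the product is controlled; this drives the induction over coefficients.\<close>
lemma has_fps_derivative_below_fps_X_mult:
  assumes "has_fps_derivative_below N A A' t"
  shows "has_fps_derivative_below (Suc N) (\<lambda>s. fps_X * A s) (fps_X * A') t"
  unfolding has_fps_derivative_below_def fps_X_mult_nth
proof (intro allI impI)
  fix j assume "j < Suc N"
  with assms show "((\<lambda>s. if j = 0 then 0 else A s $ (j - 1)) has_vector_derivative
      (if j = 0 then 0 else A' $ (j - 1))) (at t)"
    unfolding has_fps_derivative_below_def by (cases j) (auto intro!: derivative_eq_intros)
qed

lemma has_fps_derivative_below_fps_shift:
  "has_fps_derivative_below (Suc N) A A' t \<Longrightarrow>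
     has_fps_derivative_below N (\<lambda>s. fps_shift 1 (A s)) (fps_shift 1 A') t"
  unfolding has_fps_derivative_below_def by simp

lemma has_fps_derivative_below_fps_deriv:
  "has_fps_derivative_below (Suc N) A A' t \<Longrightarrow>
     has_fps_derivative_below N (\<lambda>s. fps_deriv (A s)) (fps_deriv A') t"
  unfolding has_fps_derivative_below_def by (auto intro!: has_vector_derivative_mult_right)

text \<open>By \<open>inverse_fps_eq_1_minus_fps_X\<close>, the first \<open>N + 1\<close> coefficients of \<open>inverse P\<close> are determined
  by the first \<open>N\<close> coefficients of \<open>P\<close> and \<open>inverse P\<close>, which makes an induction on \<open>N\<close> work.\<close>
lemma has_fps_derivative_below_inverse:
  fixes P :: "real \<Rightarrow> 'a::real_normed_field fps" and P' :: "'a fps"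
  assumes P0: "\<And>s. P s $ 0 = 1" and P'0: "P' $ 0 = 0"
    and deriv: "\<And>N. has_fps_derivative_below N P P' t"
  shows "has_fps_derivative_below N (\<lambda>s. inverse (P s)) (- (P' * inverse (P t) ^ 2)) t"
proof (induction N)
  case 0 show ?case by (rule has_fps_derivative_below_0)
next
  case (Suc N)
  let ?Q = "inverse (P t)"
  have "has_fps_derivative_below (Suc N) (\<lambda>s. 1 - fps_X * (fps_shift 1 (P s) * inverse (P s)))
     (0 - fps_X * (fps_shift 1 P' * ?Q + fps_shift 1 (P t) * - (P' * ?Q ^ 2))) t"
    by (intro has_fps_derivative_below_diff has_fps_derivative_below_const
          has_fps_derivative_below_fps_X_mult has_fps_derivative_below_mult
          has_fps_derivative_below_fps_shift deriv Suc.IH)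
  moreover have "1 - fps_X * (fps_shift 1 (P s) * inverse (P s)) = inverse (P s)" for s
    using inverse_fps_eq_1_minus_fps_X[OF P0] by simp
  moreover have "0 - fps_X * (fps_shift 1 P' * ?Q + fps_shift 1 (P t) * - (P' * ?Q ^ 2))
      = - (P' * ?Q ^ 2)"
  proof -
    have "0 - fps_X * (fps_shift 1 P' * ?Q + fps_shift 1 (P t) * - (P' * ?Q ^ 2))
        = - ((fps_X * fps_shift 1 P') * ?Q) + (fps_X * fps_shift 1 (P t)) * (P' * ?Q ^ 2)"
      by (simp add: algebra_simps)
    also have "fps_X * fps_shift 1 P' = P'"
      using fps_X_mult_fps_shift[of P'] P'0 by simp
    also have "fps_X * fps_shift 1 (P t) = P t - 1"
      using fps_X_mult_fps_shift[of "P t"] P0 by simp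
    also have "(P t - 1) * (P' * ?Q ^ 2) = P' * ?Q * (P t * ?Q) - P' * ?Q ^ 2"
      by (simp add: power2_eq_square algebra_simps)
    also have "P t * ?Q = 1" by (rule inverse_mult_eq_1') (simp add: P0)
    finally show ?thesis by simp
  qed
  ultimately show ?case by simp
qed

lemma has_vector_derivative_fps_ln_compose:
  fixes P :: "real \<Rightarrow> 'a::real_normed_field fps" and P' :: "'a fps"
  assumes P0: "\<And>s. P s $ 0 = 1" and P'0: "P' $ 0 = 0"
    and deriv: "\<And>N. has_fps_derivative_below N P P' t"
  shows "((\<lambda>s. (fps_ln 1 oo (P s - 1)) $ j) has_vector_derivative (P' * inverse (P t)) $ j) (at t)"
proof (cases j)
  case 0
  then show ?thesis using P'0 by (simp add: fps_ln_nth)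
next
  case (Suc i)
  let ?Q = "inverse (P t)"
  have ln_nth: "(fps_ln 1 oo (P s - 1)) $ Suc i = (fps_deriv (P s) * inverse (P s)) $ i / of_nat (Suc i)"
    for s
  proof -
    have "of_nat (Suc i) * (fps_ln 1 oo (P s - 1)) $ Suc i = (fps_deriv (P s) * inverse (P s)) $ i"
      using arg_cong[OF fps_deriv_fps_ln_compose[OF P0, of s], of "\<lambda>F. F $ i"]
      by (simp add: fps_deriv_nth)
    then show ?thesis
      by (simp add: eq_divide_eq mult.commute del: of_nat_Suc)
  qed
  have "has_fps_derivative_below (Suc i) (\<lambda>s. fps_deriv (P s) * inverse (P s))
      (fps_deriv P' * ?Q + fps_deriv (P t) * - (P' * ?Q ^ 2)) t"
    by (intro has_fps_derivative_below_mult has_fps_derivative_below_fps_deriv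
          has_fps_derivative_below_inverse P0 P'0 deriv)
  moreover have "fps_deriv (P' * ?Q) = fps_deriv P' * ?Q + fps_deriv (P t) * - (P' * ?Q ^ 2)"
    using fps_inverse_deriv[of "P t"] P0 by (simp add: fps_deriv_mult algebra_simps)
  ultimately have "((\<lambda>s. (fps_deriv (P s) * inverse (P s)) $ i) has_vector_derivative
      fps_deriv (P' * ?Q) $ i) (at t)"
    unfolding has_fps_derivative_below_def by simp
  then have "((\<lambda>s. (fps_deriv (P s) * inverse (P s)) $ i / of_nat (Suc i)) has_vector_derivative
      fps_deriv (P' * ?Q) $ i / of_nat (Suc i)) (at t)"
    by (rule has_vector_derivative_divide)
  moreover have "fps_deriv (P' * ?Q) $ i / of_nat (Suc i) = (P' * ?Q) $ Suc i"
    unfolding fps_deriv_nth by (simp del: of_nat_Suc)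
  ultimately show ?thesis unfolding Suc ln_nth by simp
qed

section \<open>Generating series of \<open>F\<close>, \<open>G\<close> and \<open>H\<close>\<close>

lemma Fc_rec: "Fc S Sb v j n = (if j = 0 then 1 else
                 v n * v (n+1) * (\<Sum>k<j-1. Fc S Sb v k n * Fc S Sb v (j-k-2) (n+1))
                 + bip (S n) (Gc S Sb v (j-1) n)
                 + bip (Hc S Sb v (j-1) n) (Sb n))"
  unfolding Fc_def Gc_def Hc_def by (simp only: fgh.simps[of S Sb v j n] Let_def fst_conv snd_conv)

lemma Gc_rec: "Gc S Sb v j n = (- \<i>/2 * Fc S Sb v j n) *s Sb (n+1)
              + v (n+1) *s (\<Sum>k<j. Fc S Sb v k n *s Gc S Sb v (j-k-1) (n+1))
              - (\<i>/2 * v (n+1) * (\<Sum>k<j. Fc S Sb v k n * Fc S Sb v (j-k-1) (n+1))) *s Sb n"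
  unfolding Fc_def Gc_def Hc_def by (simp only: fgh.simps[of S Sb v j n] Let_def fst_conv snd_conv)

lemma Hc_rec: "Hc S Sb v j n = (- \<i>/2 * Fc S Sb v j n) *s S (n+1)
              - v (n+1) *s (\<Sum>k<j. Fc S Sb v k n *s Hc S Sb v (j-k-1) (n+1))
              + (\<i>/2 * v (n+1) * (\<Sum>k<j. Fc S Sb v k n * Fc S Sb v (j-k-1) (n+1))) *s S n"
  unfolding Fc_def Gc_def Hc_def by (simp only: fgh.simps[of S Sb v j n] Let_def fst_conv snd_conv)

definition Gser :: "(int \<Rightarrow> complex^'m) \<Rightarrow> (int \<Rightarrow> complex^'m) \<Rightarrow> (int \<Rightarrow> complex) \<Rightarrow> int \<Rightarrow> 'm \<Rightarrow> complex fps"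
  where "Gser S Sb v n k = Abs_fps (\<lambda>j. Gc S Sb v j n $ k)"

definition Hser :: "(int \<Rightarrow> complex^'m) \<Rightarrow> (int \<Rightarrow> complex^'m) \<Rightarrow> (int \<Rightarrow> complex) \<Rightarrow> int \<Rightarrow> 'm \<Rightarrow> complex fps"
  where "Hser S Sb v n k = Abs_fps (\<lambda>j. Hc S Sb v j n $ k)"

lemma Pser_0: "Pser S Sb v n $ 0 = 1"
  by (simp add: Pser_def Fc_rec)

lemma Pser_rec:
  "Pser S Sb v n = 1 + fps_X * (fps_X * (fps_const (v n * v (n+1)) * (Pser S Sb v n * Pser S Sb v (n+1)))
     + (\<Sum>k\<in>UNIV. fps_const (S n $ k) * Gser S Sb v n k + Hser S Sb v n k * fps_const (Sb n $ k)))"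
  (is "_ = 1 + fps_X * (?Q + ?B)")
proof (rule fps_ext)
  fix j show "Pser S Sb v n $ j = (1 + fps_X * (?Q + ?B)) $ j"
  proof (cases j)
    case 0 then show ?thesis by (simp add: Pser_def Fc_rec)
  next
    case (Suc i)
    have "(fps_X * (fps_const (v n * v (n+1)) * (Pser S Sb v n * Pser S Sb v (n+1)))) $ i
         = v n * v (n+1) * (\<Sum>k<i. Fc S Sb v k n * Fc S Sb v (i-k-1) (n+1))"
      unfolding fps_X_mult_const_mult_nth by (simp add: Pser_def)
    moreover have "?B $ i = bip (S n) (Gc S Sb v i n) + bip (Hc S Sb v i n) (Sb n)"
      by (simp add: fps_sum_nth bip_def Gser_def Hser_def sum.distrib)
    ultimately show ?thesis using Suc by (simp add: Pser_def Fc_rec[of S Sb v "Suc i"])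
  qed
qed

lemma Gser_rec: "Gser S Sb v n k = fps_const (- \<i>/2 * Sb (n+1) $ k) * Pser S Sb v n
    + fps_X * (fps_const (v (n+1)) * (Pser S Sb v n * Gser S Sb v (n+1) k))
    - fps_X * (fps_const (\<i>/2 * v (n+1) * Sb n $ k) * (Pser S Sb v n * Pser S Sb v (n+1)))"
  (is "_ = ?R")
proof (rule fps_ext)
  show "Gser S Sb v n k $ j = ?R $ j" for j
    unfolding fps_add_nth fps_sub_nth fps_X_mult_const_mult_nth
    by (simp add: Gser_def Pser_def Gc_rec[of S Sb v j n] sum_component mult_ac sum_distrib_left)
qed

lemma Hser_rec: "Hser S Sb v n k = fps_const (- \<i>/2 * S (n+1) $ k) * Pser S Sb v n
    - fps_X * (fps_const (v (n+1)) * (Pser S Sb v n * Hser S Sb v (n+1) k))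
    + fps_X * (fps_const (\<i>/2 * v (n+1) * S n $ k) * (Pser S Sb v n * Pser S Sb v (n+1)))"
  (is "_ = ?R")
proof (rule fps_ext)
  show "Hser S Sb v n k $ j = ?R $ j" for j
    unfolding fps_add_nth fps_sub_nth fps_X_mult_const_mult_nth
    by (simp add: Hser_def Pser_def Hc_rec[of S Sb v j n] sum_component mult_ac sum_distrib_left)
qed

section \<open>Time evolution\<close>

locale discrete_Yajima_Oikawa =
  fixes S Sb S' Sb' :: "int \<Rightarrow> real \<Rightarrow> complex^'m"
    and v v' :: "int \<Rightarrow> real \<Rightarrow> complex"
    and c :: complex and t :: real
  assumes dS: "\<And>n t. (S n has_vector_derivative S' n t) (at t)"
      and dSb: "\<And>n t. (Sb n has_vector_derivative Sb' n t) (at t)"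
      and dv: "\<And>n t. (v n has_vector_derivative v' n t) (at t)"
      and eqS: "\<And>n t. \<i> *s S' n t = v n t *s (S (n+1) t + S (n-1) t) - c *s S n t"
      and eqSb: "\<And>n t. \<i> *s Sb' n t = - (v n t *s (Sb (n+1) t + Sb (n-1) t)) + c *s Sb n t"
      and eqv: "\<And>n t. v' n t = 1/2 * v n t *
                  ((bip (S (n+1) t) (Sb n t) + bip (S n t) (Sb (n+1) t))
                   - (bip (S n t) (Sb (n-1) t) + bip (S (n-1) t) (Sb n t)))"
      and vnz: "\<And>n t. v n t \<noteq> 0"
begin

definition P :: "int \<Rightarrow> real \<Rightarrow> complex fps"
  where "P n s = Pser (\<lambda>k. S k s) (\<lambda>k. Sb k s) (\<lambda>k. v k s) n"
definition G :: "int \<Rightarrow> 'm \<Rightarrow> real \<Rightarrow> complex fps"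
  where "G n k s = Gser (\<lambda>k. S k s) (\<lambda>k. Sb k s) (\<lambda>k. v k s) n k"
definition H :: "int \<Rightarrow> 'm \<Rightarrow> real \<Rightarrow> complex fps"
  where "H n k s = Hser (\<lambda>k. S k s) (\<lambda>k. Sb k s) (\<lambda>k. v k s) n k"

lemma P_0: "P n s $ 0 = 1"
  by (simp add: P_def Pser_0)

lemma P_rec: "P n s = 1 + fps_X * (fps_X * (fps_const (v n s * v (n+1) s) * (P n s * P (n+1) s))
   + (\<Sum>k\<in>UNIV. fps_const (S n s $ k) * G n k s + H n k s * fps_const (Sb n s $ k)))"
  using Pser_rec[of "\<lambda>k. S k s" "\<lambda>k. Sb k s" "\<lambda>k. v k s" n] unfolding P_def G_def H_def .

lemma G_rec: "G n k s = fps_const (- \<i>/2 * Sb (n+1) s $ k) * P n s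
    + fps_X * (fps_const (v (n+1) s) * (P n s * G (n+1) k s))
    - fps_X * (fps_const (\<i>/2 * v (n+1) s * Sb n s $ k) * (P n s * P (n+1) s))"
  using Gser_rec[of "\<lambda>k. S k s" "\<lambda>k. Sb k s" "\<lambda>k. v k s" n k] unfolding P_def G_def .

lemma H_rec: "H n k s = fps_const (- \<i>/2 * S (n+1) s $ k) * P n s
    - fps_X * (fps_const (v (n+1) s) * (P n s * H (n+1) k s))
    + fps_X * (fps_const (\<i>/2 * v (n+1) s * S n s $ k) * (P n s * P (n+1) s))"
  using Hser_rec[of "\<lambda>k. S k s" "\<lambda>k. Sb k s" "\<lambda>k. v k s" n k] unfolding P_def H_def .

definition Pinv :: "int \<Rightarrow> complex fps" where "Pinv n = inverse (P n t)"
definition g :: "int \<Rightarrow> 'm \<Rightarrow> complex fps" where "g n k = G n k t * Pinv n"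
definition h :: "int \<Rightarrow> 'm \<Rightarrow> complex fps" where "h n k = H n k t * Pinv n"
definition b :: "int \<Rightarrow> complex fps"
  where "b n = (\<Sum>k\<in>UNIV. fps_const (S n t $ k) * g n k + h n k * fps_const (Sb n t $ k))"

lemma P_mult_Pinv: "P n t * Pinv n = 1"
  unfolding Pinv_def by (rule inverse_mult_eq_1') (simp add: P_0)

lemma G_eq_P_mult_g: "G n k t = P n t * g n k"
  using P_mult_Pinv[of n] unfolding g_def by (metis mult.commute mult.left_commute mult_1_right)

lemma H_eq_P_mult_h: "H n k t = P n t * h n k"
  using P_mult_Pinv[of n] unfolding h_def by (metis mult.commute mult.left_commute mult_1_right)

lemma Pinv_eq: "Pinv n = 1 - fps_X * (fps_X * (fps_const (v n t * v (n+1) t) * P (n+1) t)) - fps_X * b n"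
proof -
  have "(\<Sum>k\<in>UNIV. fps_const (S n t $ k) * G n k t + H n k t * fps_const (Sb n t $ k)) = P n t * b n"
    unfolding b_def sum_distrib_left G_eq_P_mult_g H_eq_P_mult_h
    by (rule sum.cong) (auto simp: algebra_simps)
  with P_rec[of n t]
  have "P n t = 1 + fps_X * (fps_X * (fps_const (v n t * v (n+1) t) * (P n t * P (n+1) t)) + P n t * b n)"
    by simp
  with P_mult_Pinv[of n] show ?thesis by algebra
qed

lemma g_eq: "g n k = fps_const (- \<i>/2 * Sb (n+1) t $ k)
    + fps_X * (fps_const (v (n+1) t) * (P (n+1) t * g (n+1) k))
    - fps_X * (fps_const (\<i>/2 * v (n+1) t * Sb n t $ k) * P (n+1) t)"
  using G_rec[of n k t] G_eq_P_mult_g[of n k] G_eq_P_mult_g[of "n+1" k] P_mult_Pinv[of n]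
  by algebra

lemma h_eq: "h n k = fps_const (- \<i>/2 * S (n+1) t $ k)
    - fps_X * (fps_const (v (n+1) t) * (P (n+1) t * h (n+1) k))
    + fps_X * (fps_const (\<i>/2 * v (n+1) t * S n t $ k) * P (n+1) t)"
  using H_rec[of n k t] H_eq_P_mult_h[of n k] H_eq_P_mult_h[of "n+1" k] P_mult_Pinv[of n]
  by algebra

text \<open>Candidate time derivatives at time \<open>t\<close>: \<open>A n\<close> is the logarithmic derivative of \<open>P n\<close>
  demanded by the conservation law, and \<open>g'\<close>, \<open>h'\<close> are the derivatives of \<open>g\<close>, \<open>h\<close> predicted by
  the equations of motion.\<close>
definition A :: "int \<Rightarrow> complex fps"
  where "A n = fps_const \<i> * (b n - b (n-1)) - fps_const (v' n t / v n t)"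
definition P' :: "int \<Rightarrow> complex fps" where "P' n = P n t * A n"
definition g' :: "int \<Rightarrow> 'm \<Rightarrow> complex fps"
  where "g' n k = fps_const (\<i> * v (n+1) t) * (P (n+1) t * Pinv n * (g (n+1) k - fps_const (\<i>/2 * Sb n t $ k)))
   + fps_X * fps_const (1/2 * v n t * v (n+1) t * Sb (n-1) t $ k) * P (n+1) t
   - fps_const (\<i> * c) * g n k + fps_X * fps_const (\<i> * v n t * v (n+1) t) * P (n+1) t * g n k"
definition h' :: "int \<Rightarrow> 'm \<Rightarrow> complex fps"
  where "h' n k = - fps_const (\<i> * v (n+1) t) * (P (n+1) t * Pinv n * (h (n+1) k - fps_const (\<i>/2 * S n t $ k)))
   + fps_X * fps_const (1/2 * v n t * v (n+1) t * S (n-1) t $ k) * P (n+1) t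
   + fps_const (\<i> * c) * h n k + fps_X * fps_const (\<i> * v n t * v (n+1) t) * P (n+1) t * h n k"
definition G' :: "int \<Rightarrow> 'm \<Rightarrow> complex fps" where "G' n k = P' n * g n k + P n t * g' n k"
definition H' :: "int \<Rightarrow> 'm \<Rightarrow> complex fps" where "H' n k = P' n * h n k + P n t * h' n k"
definition b' :: "int \<Rightarrow> complex fps"
  where "b' n = (\<Sum>k\<in>UNIV. fps_const (S' n t $ k) * g n k + fps_const (S n t $ k) * g' n k
     + h' n k * fps_const (Sb n t $ k) + h n k * fps_const (Sb' n t $ k))"

definition sigma :: "int \<Rightarrow> complex fls"
  where "sigma n = (\<Sum>k\<in>UNIV. fls_const (S (n+1) t $ k) * fls_const (Sb n t $ k)
     + fls_const (S n t $ k) * fls_const (Sb (n+1) t $ k))"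
definition cross_succ :: "int \<Rightarrow> complex fls"
  where "cross_succ n = (\<Sum>k\<in>UNIV. fls_const (S (n+1) t $ k) * fps_to_fls (g n k)
     - fps_to_fls (h n k) * fls_const (Sb (n+1) t $ k))"
definition cross_pred :: "int \<Rightarrow> complex fls"
  where "cross_pred n = (\<Sum>k\<in>UNIV. fls_const (S (n-1) t $ k) * fps_to_fls (g n k)
     - fps_to_fls (h n k) * fls_const (Sb (n-1) t $ k))"

text \<open>The candidates are naturally expressed through \<open>\<lambda> = fls_X_inv\<close>, so the verification is
  carried out in Laurent series; \<open>fps_to_fls\<close> is injective.\<close>
lemma fls_P_mult_Pinv: "fps_to_fls (P n t) * fps_to_fls (Pinv n) = 1"
  using arg_cong[OF P_mult_Pinv[of n], of fps_to_fls] by (simp only: fls_normalize fps_to_fls_eq_1_iff)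

lemma fls_Pinv: "fps_to_fls (Pinv n)
    = 1 - fls_X * (fls_X * (fls_const (v n t) * fls_const (v (n+1) t) * fps_to_fls (P (n+1) t))) - fls_X * fps_to_fls (b n)"
  by (subst Pinv_eq[of n]) (simp only: fls_normalize)

lemma fls_g: "fps_to_fls (g n k) = - fls_const \<i> * fls_const (inverse 2) * fls_const (Sb (n+1) t $ k)
    + fls_X * (fls_const (v (n+1) t) * (fps_to_fls (P (n+1) t) * fps_to_fls (g (n+1) k)))
    - fls_X * (fls_const \<i> * fls_const (inverse 2) * fls_const (v (n+1) t) * fls_const (Sb n t $ k) * fps_to_fls (P (n+1) t))"
  by (subst g_eq[of n k]) (simp only: fls_normalize)

lemma fls_h: "fps_to_fls (h n k) = - fls_const \<i> * fls_const (inverse 2) * fls_const (S (n+1) t $ k)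
    - fls_X * (fls_const (v (n+1) t) * (fps_to_fls (P (n+1) t) * fps_to_fls (h (n+1) k)))
    + fls_X * (fls_const \<i> * fls_const (inverse 2) * fls_const (v (n+1) t) * fls_const (S n t $ k) * fps_to_fls (P (n+1) t))"
  by (subst h_eq[of n k]) (simp only: fls_normalize)

lemma fls_g': "fps_to_fls (g' n k) = - fls_const (inverse 2) * fls_X_inv * fps_to_fls (Pinv n) * fls_const (Sb (n+1) t $ k)
   + fls_const (inverse 2) * (fls_X * fls_const (v n t) * fls_const (v (n+1) t) * fps_to_fls (P (n+1) t)) * fls_const (Sb (n-1) t $ k)
   + (fls_const \<i> * (fls_X_inv - fps_to_fls (b n)) - fls_const \<i> * fls_const c) * fps_to_fls (g n k)"
  unfolding g'_def
  using fls_g[of n k] fls_Pinv[of n] fls_P_mult_Pinv[of n] fls_unit_relations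
  by (simp only: fls_normalize) algebra

lemma fls_h': "fps_to_fls (h' n k) = - fls_const (inverse 2) * fls_X_inv * fps_to_fls (Pinv n) * fls_const (S (n+1) t $ k)
   + fls_const (inverse 2) * (fls_X * fls_const (v n t) * fls_const (v (n+1) t) * fps_to_fls (P (n+1) t)) * fls_const (S (n-1) t $ k)
   + (fls_const \<i> * (fls_X_inv - fps_to_fls (b n)) + fls_const \<i> * fls_const c) * fps_to_fls (h n k)"
  unfolding h'_def
  using fls_h[of n k] fls_Pinv[of n] fls_P_mult_Pinv[of n] fls_unit_relations
  by (simp only: fls_normalize) algebra

lemma fls_const_S'_nth: "fls_const (S' n t $ k)
    = - fls_const \<i> * (fls_const (v n t) * (fls_const (S (n+1) t $ k) + fls_const (S (n-1) t $ k))
        - fls_const c * fls_const (S n t $ k))"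
proof -
  have "S' n t $ k = - \<i> * (\<i> * S' n t $ k)"
    by (simp add: mult.assoc[symmetric])
  also have "\<i> * S' n t $ k = v n t * (S (n+1) t $ k + S (n-1) t $ k) - c * S n t $ k"
    using arg_cong[OF eqS[of n t], of "\<lambda>x. x $ k"] by (simp add: algebra_simps)
  finally show ?thesis by (simp only: fls_normalize)
qed

lemma fls_const_Sb'_nth: "fls_const (Sb' n t $ k)
    = - fls_const \<i> * (- (fls_const (v n t) * (fls_const (Sb (n+1) t $ k) + fls_const (Sb (n-1) t $ k)))
        + fls_const c * fls_const (Sb n t $ k))"
proof -
  have "Sb' n t $ k = - \<i> * (\<i> * Sb' n t $ k)"
    by (simp add: mult.assoc[symmetric])
  also have "\<i> * Sb' n t $ k = - (v n t * (Sb (n+1) t $ k + Sb (n-1) t $ k)) + c * Sb n t $ k"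
    using arg_cong[OF eqSb[of n t], of "\<lambda>x. x $ k"] by (simp add: algebra_simps)
  finally show ?thesis by (simp only: fls_normalize)
qed

lemma fls_const_v': "fls_const (v' n t) = fls_const (inverse 2) * fls_const (v n t) * (sigma n - sigma (n-1))"
  by (subst eqv) (simp only: fls_normalize bip_def fls_const_sum sigma_def diff_add_cancel sum.distrib, algebra)

lemma fls_const_v_mult_inverse: "fls_const (v n t) * fls_const (inverse (v n t)) = 1"
  using vnz[of n t] by simp

lemma fls_b: "fps_to_fls (b n)
    = (\<Sum>k\<in>UNIV. fls_const (S n t $ k) * fps_to_fls (g n k) + fps_to_fls (h n k) * fls_const (Sb n t $ k))"
  unfolding b_def by (simp only: fls_normalize)

lemma fls_A: "fps_to_fls (A n)
    = fls_const \<i> * (fps_to_fls (b n) - fps_to_fls (b (n-1))) - fls_const (v' n t) * fls_const (inverse (v n t))"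
  unfolding A_def by (simp only: fls_normalize)

lemma cross_succ_eq: "cross_succ n = fls_X * fls_const (v (n+1) t) * fps_to_fls (P (n+1) t) * fps_to_fls (b (n+1))
   - fls_const \<i> * fls_const (inverse 2) * fls_X * fls_const (v (n+1) t) * fps_to_fls (P (n+1) t) * sigma n"
proof -
  have "cross_succ n = (\<Sum>k\<in>UNIV. fls_X * fls_const (v (n+1) t) * fps_to_fls (P (n+1) t) *
       (fls_const (S (n+1) t $ k) * fps_to_fls (g (n+1) k) + fps_to_fls (h (n+1) k) * fls_const (Sb (n+1) t $ k))
     - fls_const \<i> * fls_const (inverse 2) * fls_X * fls_const (v (n+1) t) * fps_to_fls (P (n+1) t) *
       (fls_const (S (n+1) t $ k) * fls_const (Sb n t $ k) + fls_const (S n t $ k) * fls_const (Sb (n+1) t $ k)))"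
    unfolding cross_succ_def
    by (rule sum.cong[OF refl], subst fls_g, subst fls_h) algebra
  also have "\<dots> = fls_X * fls_const (v (n+1) t) * fps_to_fls (P (n+1) t) * fps_to_fls (b (n+1))
   - fls_const \<i> * fls_const (inverse 2) * fls_X * fls_const (v (n+1) t) * fps_to_fls (P (n+1) t) * sigma n"
    unfolding fls_b sigma_def by (simp only: sum.distrib sum_subtractf sum_distrib_left[symmetric])
  finally show ?thesis .
qed

lemma cross_pred_eq: "fls_X * fls_const (v n t) * fps_to_fls (P n t) * cross_pred n
    = fps_to_fls (b (n-1)) + fls_const \<i> * fls_const (inverse 2) * sigma (n-1)"
proof -
  have "fls_X * fls_const (v n t) * fps_to_fls (P n t) * cross_pred n = (\<Sum>k\<in>UNIV.
       (fls_const (S (n-1) t $ k) * fps_to_fls (g (n-1) k) + fps_to_fls (h (n-1) k) * fls_const (Sb (n-1) t $ k))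
     + fls_const \<i> * fls_const (inverse 2) *
       (fls_const (S n t $ k) * fls_const (Sb (n-1) t $ k) + fls_const (S (n-1) t $ k) * fls_const (Sb n t $ k)))"
    unfolding cross_pred_def sum_distrib_left
    by (rule sum.cong[OF refl], subst fls_g[of "n-1"], subst fls_h[of "n-1"], simp only: diff_add_cancel) algebra
  also have "\<dots> = fps_to_fls (b (n-1)) + fls_const \<i> * fls_const (inverse 2) * sigma (n-1)"
    unfolding fls_b sigma_def diff_add_cancel by (simp only: sum.distrib sum_distrib_left[symmetric])
  finally show ?thesis .
qed

lemma fls_b': "fps_to_fls (b' n) = - fls_const (inverse 2) * fls_X_inv * fps_to_fls (Pinv n) * sigma n
   + fls_const (inverse 2) * (fls_X * fls_const (v n t) * fls_const (v (n+1) t) * fps_to_fls (P (n+1) t)) * sigma (n-1)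
   + fls_const \<i> * (fls_X_inv - fps_to_fls (b n)) * fps_to_fls (b n)
   - fls_const \<i> * fls_const (v n t) * cross_succ n - fls_const \<i> * fls_const (v n t) * cross_pred n"
proof -
  have "fps_to_fls (b' n) = (\<Sum>k\<in>UNIV. - fls_const (inverse 2) * fls_X_inv * fps_to_fls (Pinv n) *
          (fls_const (S (n+1) t $ k) * fls_const (Sb n t $ k) + fls_const (S n t $ k) * fls_const (Sb (n+1) t $ k))
   + fls_const (inverse 2) * (fls_X * fls_const (v n t) * fls_const (v (n+1) t) * fps_to_fls (P (n+1) t)) *
          (fls_const (S n t $ k) * fls_const (Sb (n-1) t $ k) + fls_const (S (n-1) t $ k) * fls_const (Sb n t $ k))
   + fls_const \<i> * (fls_X_inv - fps_to_fls (b n)) *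
          (fls_const (S n t $ k) * fps_to_fls (g n k) + fps_to_fls (h n k) * fls_const (Sb n t $ k))
   - fls_const \<i> * fls_const (v n t) *
          (fls_const (S (n+1) t $ k) * fps_to_fls (g n k) - fps_to_fls (h n k) * fls_const (Sb (n+1) t $ k))
   - fls_const \<i> * fls_const (v n t) *
          (fls_const (S (n-1) t $ k) * fps_to_fls (g n k) - fps_to_fls (h n k) * fls_const (Sb (n-1) t $ k)))"
    unfolding b'_def fls_normalize
    by (rule sum.cong[OF refl], simp only: fls_g' fls_h' fls_const_S'_nth fls_const_Sb'_nth) algebra
  also have "\<dots> = - fls_const (inverse 2) * fls_X_inv * fps_to_fls (Pinv n) * sigma n
   + fls_const (inverse 2) * (fls_X * fls_const (v n t) * fls_const (v (n+1) t) * fps_to_fls (P (n+1) t)) * sigma (n-1)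
   + fls_const \<i> * (fls_X_inv - fps_to_fls (b n)) * fps_to_fls (b n)
   - fls_const \<i> * fls_const (v n t) * cross_succ n - fls_const \<i> * fls_const (v n t) * cross_pred n"
    unfolding fls_b sigma_def diff_add_cancel cross_succ_def cross_pred_def
    by (simp only: sum.distrib sum_subtractf sum_distrib_left[symmetric])
  finally show ?thesis .
qed

lemma coupling_derivative_eq: "(\<Sum>k\<in>UNIV. (fps_const (S' n t $ k) * G n k t + fps_const (S n t $ k) * G' n k)
      + (H' n k * fps_const (Sb n t $ k) + H n k t * fps_const (Sb' n t $ k))) = P' n * b n + P n t * b' n"
proof -
  have "(\<Sum>k\<in>UNIV. (fps_const (S' n t $ k) * G n k t + fps_const (S n t $ k) * G' n k)
      + (H' n k * fps_const (Sb n t $ k) + H n k t * fps_const (Sb' n t $ k)))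
     = (\<Sum>k\<in>UNIV. P' n * (fps_const (S n t $ k) * g n k + h n k * fps_const (Sb n t $ k))
        + P n t * (fps_const (S' n t $ k) * g n k + fps_const (S n t $ k) * g' n k
     + h' n k * fps_const (Sb n t $ k) + h n k * fps_const (Sb' n t $ k)))"
    by (rule sum.cong[OF refl]) (simp only: G_eq_P_mult_g H_eq_P_mult_h G'_def H'_def, algebra)
  also have "\<dots> = P' n * b n + P n t * b' n"
    by (simp only: b_def b'_def sum_distrib_left[symmetric] sum.distrib)
  finally show ?thesis .
qed

text \<open>The candidates satisfy the recursions \<open>P_rec\<close>, \<open>G_rec\<close>, \<open>H_rec\<close> differentiated in time by the
  product rule; this is where the equations of motion enter.\<close>
lemma P'_rec: "P' n = fps_X * (fps_X * (fps_const (v n t * v' (n+1) t + v' n t * v (n+1) t) * (P n t * P (n+1) t)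
      + fps_const (v n t * v (n+1) t) * (P' n * P (n+1) t + P n t * P' (n+1)))
   + (\<Sum>k\<in>UNIV. (fps_const (S' n t $ k) * G n k t + fps_const (S n t $ k) * G' n k)
      + (H' n k * fps_const (Sb n t $ k) + H n k t * fps_const (Sb' n t $ k))))"
  unfolding coupling_derivative_eq
  apply (subst fps_to_fls_eq_iff[symmetric])
  apply (simp only: P'_def fls_normalize fls_b'[of n] fls_A[of n] fls_A[of "n+1", unfolded add_diff_cancel_right']
      cross_succ_eq[of n] fls_const_v'[of n])
  apply (simp only: fls_Pinv[of n])
  using cross_pred_eq[of n] fls_P_mult_Pinv[of n, unfolded fls_Pinv[of n]] fls_unit_relations
    fls_const_v_mult_inverse[of n] fls_const_v_mult_inverse[of "n+1"]
  by algebra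

lemma G'_rec: "G' n k = (fps_const (- \<i>/2 * Sb' (n+1) t $ k) * P n t + fps_const (- \<i>/2 * Sb (n+1) t $ k) * P' n)
   + fps_X * (fps_const (v' (n+1) t) * (P n t * G (n+1) k t) + fps_const (v (n+1) t) * (P' n * G (n+1) k t + P n t * G' (n+1) k))
   - fps_X * (fps_const (\<i>/2 * v (n+1) t * Sb' n t $ k + \<i>/2 * v' (n+1) t * Sb n t $ k) * (P n t * P (n+1) t)
        + fps_const (\<i>/2 * v (n+1) t * Sb n t $ k) * (P' n * P (n+1) t + P n t * P' (n+1)))"
  apply (subst fps_to_fls_eq_iff[symmetric])
  apply (simp only: G'_def P'_def G_eq_P_mult_g[of "n+1" k] fls_normalize fls_g'[of n k]
      fls_g'[of "n+1" k, unfolded add_diff_cancel_right'] fls_A[of "n+1", unfolded add_diff_cancel_right']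
      fls_const_Sb'_nth[of n k] fls_const_Sb'_nth[of "n+1" k, unfolded add_diff_cancel_right'])
  apply (simp only: fls_g[of n k] fls_Pinv[of n])
  using fls_Pinv[of "n+1"] fls_P_mult_Pinv[of "n+1"] fls_unit_relations fls_const_v_mult_inverse[of "n+1"]
  by algebra

lemma H'_rec: "H' n k = (fps_const (- \<i>/2 * S' (n+1) t $ k) * P n t + fps_const (- \<i>/2 * S (n+1) t $ k) * P' n)
   - fps_X * (fps_const (v' (n+1) t) * (P n t * H (n+1) k t) + fps_const (v (n+1) t) * (P' n * H (n+1) k t + P n t * H' (n+1) k))
   + fps_X * (fps_const (\<i>/2 * v (n+1) t * S' n t $ k + \<i>/2 * v' (n+1) t * S n t $ k) * (P n t * P (n+1) t)
        + fps_const (\<i>/2 * v (n+1) t * S n t $ k) * (P' n * P (n+1) t + P n t * P' (n+1)))"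
  apply (subst fps_to_fls_eq_iff[symmetric])
  apply (simp only: H'_def P'_def H_eq_P_mult_h[of "n+1" k] fls_normalize fls_h'[of n k]
      fls_h'[of "n+1" k, unfolded add_diff_cancel_right'] fls_A[of "n+1", unfolded add_diff_cancel_right']
      fls_const_S'_nth[of n k] fls_const_S'_nth[of "n+1" k, unfolded add_diff_cancel_right'])
  apply (simp only: fls_h[of n k] fls_Pinv[of n])
  using fls_Pinv[of "n+1"] fls_P_mult_Pinv[of "n+1"] fls_unit_relations fls_const_v_mult_inverse[of "n+1"]
  by algebra

lemma has_vector_derivative_S_nth: "((\<lambda>s. S n s $ k) has_vector_derivative S' n t $ k) (at t)"
  by (rule bounded_linear.has_vector_derivative[OF bounded_linear_vec_nth dS])

lemma has_vector_derivative_Sb_nth: "((\<lambda>s. Sb n s $ k) has_vector_derivative Sb' n t $ k) (at t)"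
  by (rule bounded_linear.has_vector_derivative[OF bounded_linear_vec_nth dSb])

lemma has_fps_derivative_below_Suc_P:
  assumes IP: "\<And>n. has_fps_derivative_below N (P n) (P' n) t"
    and IG: "\<And>n k. has_fps_derivative_below N (G n k) (G' n k) t"
    and IH: "\<And>n k. has_fps_derivative_below N (H n k) (H' n k) t"
  shows "has_fps_derivative_below (Suc N) (P n) (P' n) t"
proof -
  have vv: "has_fps_derivative_below N (\<lambda>s. fps_X * (fps_const (v n s * v (n+1) s) * (P n s * P (n+1) s)))
     (fps_X * (fps_const (v n t * v' (n+1) t + v' n t * v (n+1) t) * (P n t * P (n+1) t)
      + fps_const (v n t * v (n+1) t) * (P' n * P (n+1) t + P n t * P' (n+1)))) t"
    by (rule has_fps_derivative_below_SucD[OF has_fps_derivative_below_fps_X_mult[OF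
          has_fps_derivative_below_mult[OF has_fps_derivative_below_fps_const[OF
            has_vector_derivative_mult[OF dv dv]] has_fps_derivative_below_mult[OF IP IP]]]])
  have coupling: "has_fps_derivative_below N
       (\<lambda>s. \<Sum>k\<in>UNIV. fps_const (S n s $ k) * G n k s + H n k s * fps_const (Sb n s $ k))
       (\<Sum>k\<in>UNIV. (fps_const (S' n t $ k) * G n k t + fps_const (S n t $ k) * G' n k)
         + (H' n k * fps_const (Sb n t $ k) + H n k t * fps_const (Sb' n t $ k))) t"
    by (intro has_fps_derivative_below_sum has_fps_derivative_below_add
        has_fps_derivative_below_mult[OF has_fps_derivative_below_fps_const[OF has_vector_derivative_S_nth] IG]
        has_fps_derivative_below_mult[OF IH has_fps_derivative_below_fps_const[OF has_vector_derivative_Sb_nth]])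
  have "has_fps_derivative_below (Suc N)
      (\<lambda>s. 1 + fps_X * (fps_X * (fps_const (v n s * v (n+1) s) * (P n s * P (n+1) s))
        + (\<Sum>k\<in>UNIV. fps_const (S n s $ k) * G n k s + H n k s * fps_const (Sb n s $ k))))
      (0 + fps_X * (fps_X * (fps_const (v n t * v' (n+1) t + v' n t * v (n+1) t) * (P n t * P (n+1) t)
        + fps_const (v n t * v (n+1) t) * (P' n * P (n+1) t + P n t * P' (n+1)))
        + (\<Sum>k\<in>UNIV. (fps_const (S' n t $ k) * G n k t + fps_const (S n t $ k) * G' n k)
          + (H' n k * fps_const (Sb n t $ k) + H n k t * fps_const (Sb' n t $ k))))) t"
    by (intro has_fps_derivative_below_add has_fps_derivative_below_const
        has_fps_derivative_below_fps_X_mult vv coupling)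
  then show ?thesis
    by (simp only: P_rec[symmetric] P'_rec[symmetric] add_0_left)
qed

lemma has_fps_derivative_below_Suc_G:
  assumes IP: "\<And>n. has_fps_derivative_below N (P n) (P' n) t"
    and P: "\<And>n. has_fps_derivative_below (Suc N) (P n) (P' n) t"
    and IG: "\<And>n k. has_fps_derivative_below N (G n k) (G' n k) t"
  shows "has_fps_derivative_below (Suc N) (G n k) (G' n k) t"
proof -
  have "has_fps_derivative_below (Suc N) (\<lambda>s. fps_const (- \<i>/2 * Sb (n+1) s $ k) * P n s
      + fps_X * (fps_const (v (n+1) s) * (P n s * G (n+1) k s))
      - fps_X * (fps_const (\<i>/2 * v (n+1) s * Sb n s $ k) * (P n s * P (n+1) s)))
    ((fps_const (- \<i>/2 * Sb' (n+1) t $ k) * P n t + fps_const (- \<i>/2 * Sb (n+1) t $ k) * P' n)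
      + fps_X * (fps_const (v' (n+1) t) * (P n t * G (n+1) k t) + fps_const (v (n+1) t) * (P' n * G (n+1) k t + P n t * G' (n+1) k))
      - fps_X * (fps_const (\<i>/2 * v (n+1) t * Sb' n t $ k + \<i>/2 * v' (n+1) t * Sb n t $ k) * (P n t * P (n+1) t)
        + fps_const (\<i>/2 * v (n+1) t * Sb n t $ k) * (P' n * P (n+1) t + P n t * P' (n+1)))) t"
    by (intro has_fps_derivative_below_diff has_fps_derivative_below_add has_fps_derivative_below_fps_X_mult
        has_fps_derivative_below_mult[OF has_fps_derivative_below_fps_const P]
        has_fps_derivative_below_mult[OF has_fps_derivative_below_fps_const[OF dv] has_fps_derivative_below_mult[OF IP IG]]
        has_fps_derivative_below_mult[OF has_fps_derivative_below_fps_const has_fps_derivative_below_mult[OF IP IP]]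
        derivative_intros has_vector_derivative_Sb_nth dv)
  then show ?thesis
    by (simp only: G_rec[symmetric] G'_rec[symmetric])
qed

lemma has_fps_derivative_below_Suc_H:
  assumes IP: "\<And>n. has_fps_derivative_below N (P n) (P' n) t"
    and P: "\<And>n. has_fps_derivative_below (Suc N) (P n) (P' n) t"
    and IH: "\<And>n k. has_fps_derivative_below N (H n k) (H' n k) t"
  shows "has_fps_derivative_below (Suc N) (H n k) (H' n k) t"
proof -
  have "has_fps_derivative_below (Suc N) (\<lambda>s. fps_const (- \<i>/2 * S (n+1) s $ k) * P n s
      - fps_X * (fps_const (v (n+1) s) * (P n s * H (n+1) k s))
      + fps_X * (fps_const (\<i>/2 * v (n+1) s * S n s $ k) * (P n s * P (n+1) s)))
    ((fps_const (- \<i>/2 * S' (n+1) t $ k) * P n t + fps_const (- \<i>/2 * S (n+1) t $ k) * P' n)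
      - fps_X * (fps_const (v' (n+1) t) * (P n t * H (n+1) k t) + fps_const (v (n+1) t) * (P' n * H (n+1) k t + P n t * H' (n+1) k))
      + fps_X * (fps_const (\<i>/2 * v (n+1) t * S' n t $ k + \<i>/2 * v' (n+1) t * S n t $ k) * (P n t * P (n+1) t)
        + fps_const (\<i>/2 * v (n+1) t * S n t $ k) * (P' n * P (n+1) t + P n t * P' (n+1)))) t"
    by (intro has_fps_derivative_below_diff has_fps_derivative_below_add has_fps_derivative_below_fps_X_mult
        has_fps_derivative_below_mult[OF has_fps_derivative_below_fps_const P]
        has_fps_derivative_below_mult[OF has_fps_derivative_below_fps_const[OF dv] has_fps_derivative_below_mult[OF IP IH]]
        has_fps_derivative_below_mult[OF has_fps_derivative_below_fps_const has_fps_derivative_below_mult[OF IP IP]]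
        derivative_intros has_vector_derivative_S_nth dv)
  then show ?thesis
    by (simp only: H_rec[symmetric] H'_rec[symmetric])
qed

lemma has_fps_derivative_below_P_G_H:
  "has_fps_derivative_below N (P n) (P' n) t \<and> has_fps_derivative_below N (G n k) (G' n k) t
     \<and> has_fps_derivative_below N (H n k) (H' n k) t"
proof (induction N arbitrary: n k)
  case 0
  then show ?case by (simp add: has_fps_derivative_below_0)
next
  case (Suc N)
  then have IP: "\<And>n. has_fps_derivative_below N (P n) (P' n) t"
    and IG: "\<And>n k. has_fps_derivative_below N (G n k) (G' n k) t"
    and IH: "\<And>n k. has_fps_derivative_below N (H n k) (H' n k) t"
    by blast+
  have P: "\<And>n. has_fps_derivative_below (Suc N) (P n) (P' n) t"
    by (rule has_fps_derivative_below_Suc_P[OF IP IG IH])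
  show ?case
    using P has_fps_derivative_below_Suc_G[OF IP P IG] has_fps_derivative_below_Suc_H[OF IP P IH] by blast
qed

lemma P'_0: "P' n $ 0 = 0"
  by (subst P'_rec) simp

lemma A_eq: "A n = P' n * Pinv n"
  using P_mult_Pinv[of n] unfolding P'_def by algebra

lemma has_vector_derivative_logP:
  "((\<lambda>s. logP (\<lambda>k. S k s) (\<lambda>k. Sb k s) (\<lambda>k. v k s) n $ j) has_vector_derivative A n $ j) (at t)"
  unfolding logP_def P_def[symmetric] A_eq Pinv_def
  using has_fps_derivative_below_P_G_H by (intro has_vector_derivative_fps_ln_compose P_0 P'_0) blast

lemma Jser_diff: "Jser (\<lambda>k. S k t) (\<lambda>k. Sb k t) (\<lambda>k. v k t) (n+1) - Jser (\<lambda>k. S k t) (\<lambda>k. Sb k t) (\<lambda>k. v k t) n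
   = fls_const \<i> * (fps_to_fls (b n) - fps_to_fls (b (n-1)))"
  unfolding Jser_def P_def[symmetric] add_diff_cancel_right' Pinv_def[symmetric]
  apply (simp only: fls_normalize)
  using fls_Pinv[of n] fls_Pinv[of "n-1", unfolded diff_add_cancel] fls_unit_relations by algebra

lemma conservation_law: "\<exists>D :: complex fps.
           (\<forall>j. ((\<lambda>s. logP (\<lambda>k. S k s) (\<lambda>k. Sb k s) (\<lambda>k. v k s) n $ j)
                   has_vector_derivative D $ j) (at t))
         \<and> fls_const (v' n t / v n t) + fps_to_fls D
             = Jser (\<lambda>k. S k t) (\<lambda>k. Sb k t) (\<lambda>k. v k t) (n+1)
               - Jser (\<lambda>k. S k t) (\<lambda>k. Sb k t) (\<lambda>k. v k t) n"
proof (intro exI conjI allI)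
  show "((\<lambda>s. logP (\<lambda>k. S k s) (\<lambda>k. Sb k s) (\<lambda>k. v k s) n $ j) has_vector_derivative A n $ j) (at t)" for j
    by (rule has_vector_derivative_logP)
  show "fls_const (v' n t / v n t) + fps_to_fls (A n) = Jser (\<lambda>k. S k t) (\<lambda>k. Sb k t) (\<lambda>k. v k t) (n+1)
               - Jser (\<lambda>k. S k t) (\<lambda>k. Sb k t) (\<lambda>k. v k t) n"
    unfolding Jser_diff fls_A by (simp only: fls_const_divide) algebra
qed

end

theorem proposition3p1:
  fixes S Sb S' Sb' :: "int \<Rightarrow> real \<Rightarrow> complex^'m"
    and v v' :: "int \<Rightarrow> real \<Rightarrow> complex"
    and c :: complex
  assumes dS: "\<And>n t. (S n has_vector_derivative S' n t) (at t)"
      and dSb: "\<And>n t. (Sb n has_vector_derivative Sb' n t) (at t)"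
      and dv: "\<And>n t. (v n has_vector_derivative v' n t) (at t)"
      and eqS: "\<And>n t. \<i> *s S' n t = v n t *s (S (n+1) t + S (n-1) t) - c *s S n t"
      and eqSb: "\<And>n t. \<i> *s Sb' n t = - (v n t *s (Sb (n+1) t + Sb (n-1) t)) + c *s Sb n t"
      and eqv: "\<And>n t. v' n t = 1/2 * v n t *
                  ((bip (S (n+1) t) (Sb n t) + bip (S n t) (Sb (n+1) t))
                   - (bip (S n t) (Sb (n-1) t) + bip (S (n-1) t) (Sb n t)))"
      and vnz: "\<And>n t. v n t \<noteq> 0"
  shows "\<exists>D :: complex fps.
           (\<forall>j. ((\<lambda>s. logP (\<lambda>k. S k s) (\<lambda>k. Sb k s) (\<lambda>k. v k s) n $ j)
                   has_vector_derivative D $ j) (at t))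
         \<and> fls_const (v' n t / v n t) + fps_to_fls D
             = Jser (\<lambda>k. S k t) (\<lambda>k. Sb k t) (\<lambda>k. v k t) (n+1)
               - Jser (\<lambda>k. S k t) (\<lambda>k. Sb k t) (\<lambda>k. v k t) n"
proof -
  interpret discrete_Yajima_Oikawa S Sb S' Sb' v v' c t
    by unfold_locales (fact assms)+
  show ?thesis by (rule conservation_law)
qed

end
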